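(* Let $f_1,\dots,f_T:\mathbb{R}^d\to\mathbb{R}$ be convex differentiable with $\|\nabla f_t(x)\|\le G$ for all $x$ and $t$, and let $f=\sum_{t=1}^Tf_t$. Let $g:\mathbb{R}^d\to\mathbb{R}$ be convex and differentiable, let $\gamma\ge0$, and assume there is a point $x$ with $g(x)<-\gamma$ and that $\min_{x:\,g(x)+\gamma=0}\|\nabla g(x)\|\ge\sigma>0$. Let $x_*$ and $x_\gamma$ be minimizers of $f$ over $\{g(x)\le0\}$ and over $\{g(x)\le-\gamma\}$, respectively (assumed to exist). Then $$|f(x_* )-f(x_\gamma)|\le\frac{G}{\sigma}\gamma T.$$
   Context: All norms are Euclidean. *)

theory Defs
  imports "HOL-Analysis.Analysis"
begin

end

theory Submission
  imports Defs
begin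

(* Write F = f_1 + ... + f_T and let p be a point of the tightened
   feasible set {g <= -gamma} nearest to x_*.  Then
     F(x_* ) <= F(x_gamma) <= F(p) <= F(x_* ) + T G |x_* - p|,
   the first two inequalities by optimality (x_gamma is feasible for the original problem,
   p for the tightened one), the last because F is (T G)-Lipschitz.  It remains to show
   |x_* - p| <= gamma / sigma.  If x_* <> p then p lies on the level set {g = -gamma}, and the
   first-order optimality of p for the distance says that x_* - p points along the gradient
   u = grad g(p); hence by the gradient inequality for the convex g,
     0 >= g(x_* ) >= g(p) + u . (x_* - p) = -gamma + |u| |x_* - p| >= -gamma + sigma |x_* - p|. *)

lemma gradient_along_line:
  fixes g :: "'a::real_inner \<Rightarrow> real"
  assumes "(g has_derivative (\<lambda>h. u \<bullet> h)) (at (p + s *\<^sub>R w))"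
  shows "((\<lambda>s. g (p + s *\<^sub>R w)) has_real_derivative (u \<bullet> w)) (at s)"
proof -
  have "((\<lambda>s. p + s *\<^sub>R w) has_derivative (\<lambda>h. h *\<^sub>R w)) (at s)"
    by (auto intro!: derivative_eq_intros)
  from diff_chain_at[OF this assms]
  have "((\<lambda>s. g (p + s *\<^sub>R w)) has_derivative (\<lambda>h. u \<bullet> (h *\<^sub>R w))) (at s)"
    by (simp add: o_def)
  moreover have "(\<lambda>h. u \<bullet> (h *\<^sub>R w)) = (*) (u \<bullet> w)" by (rule ext) simp
  ultimately show ?thesis
    by (simp add: has_field_derivative_def)
qed

lemma convex_on_line:
  fixes g :: "'a::real_vector \<Rightarrow> real"
  assumes "convex_on UNIV g"
  shows "convex_on UNIV (\<lambda>s. g (p + s *\<^sub>R w))"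
proof (rule convex_onI)
  fix t x y :: real assume t: "0 < t" "t < 1"
  have "p + ((1 - t) * x + t * y) *\<^sub>R w = (1 - t) *\<^sub>R (p + x *\<^sub>R w) + t *\<^sub>R (p + y *\<^sub>R w)"
    by (simp add: algebra_simps)
  then show "g (p + ((1 - t) *\<^sub>R x + t *\<^sub>R y) *\<^sub>R w) \<le> (1 - t) * g (p + x *\<^sub>R w) + t * g (p + y *\<^sub>R w)"
    using convex_onD[OF assms, of t "p + x *\<^sub>R w" "p + y *\<^sub>R w"] t by simp
qed simp

lemma convex_gradient_inequality:
  fixes g :: "'a::real_inner \<Rightarrow> real"
  assumes "convex_on UNIV g" and "(g has_derivative (\<lambda>h. u \<bullet> h)) (at p)"
  shows "g p + u \<bullet> (x - p) \<le> g x"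
proof -
  let ?\<phi> = "\<lambda>s. g (p + s *\<^sub>R (x - p))"
  have deriv: "(?\<phi> has_real_derivative (u \<bullet> (x - p))) (at 0 within UNIV)"
    using gradient_along_line[of g u p 0 "x - p"] assms(2) by simp
  have "?\<phi> 1 - ?\<phi> 0 \<ge> (u \<bullet> (x - p)) * (1 - 0)"
    by (rule convex_on_imp_above_tangent[OF convex_on_line[OF assms(1)] _ _ _ deriv]) auto
  then show ?thesis by simp
qed

lemma lipschitz_from_gradient_bound:
  fixes f :: "'a::real_inner \<Rightarrow> real"
  assumes "\<And>x. (f has_derivative (\<lambda>h. a x \<bullet> h)) (at x)" and "\<And>x. norm (a x) \<le> G"
  shows "\<bar>f x - f y\<bar> \<le> G * norm (x - y)"
proof -
  have "norm (f x - f y) \<le> G * norm (x - y)"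
  proof (rule differentiable_bound[of UNIV])
    fix z
    show "(f has_derivative (\<lambda>h. a z \<bullet> h)) (at z within UNIV)" using assms(1) by simp
    have "onorm (\<lambda>h. a z \<bullet> h) \<le> norm (a z)"
      by (rule onorm_bound) (auto simp: Cauchy_Schwarz_ineq2)
    then show "onorm (\<lambda>h. a z \<bullet> h) \<le> G" using assms(2)[of z] by linarith
  qed auto
  then show ?thesis by simp
qed

lemma sum_lipschitz_from_gradient_bound:
  fixes f :: "'i \<Rightarrow> 'a::real_inner \<Rightarrow> real"
  assumes "\<And>i x. i \<in> I \<Longrightarrow> (f i has_derivative (\<lambda>h. a i x \<bullet> h)) (at x)"
    and "\<And>i x. i \<in> I \<Longrightarrow> norm (a i x) \<le> G"
  shows "\<bar>(\<Sum>i\<in>I. f i x) - (\<Sum>i\<in>I. f i y)\<bar> \<le> real (card I) * G * norm (x - y)"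
proof -
  have "\<bar>(\<Sum>i\<in>I. f i x) - (\<Sum>i\<in>I. f i y)\<bar> = \<bar>\<Sum>i\<in>I. f i x - f i y\<bar>"
    by (simp add: sum_subtractf)
  also have "\<dots> \<le> (\<Sum>i\<in>I. \<bar>f i x - f i y\<bar>)" by (rule sum_abs)
  also have "\<dots> \<le> (\<Sum>i\<in>I. G * norm (x - y))"
    by (rule sum_mono) (rule lipschitz_from_gradient_bound[OF assms], auto)
  also have "\<dots> = real (card I) * G * norm (x - y)" by simp
  finally show ?thesis .
qed

lemma descent_direction:
  fixes g :: "'a::real_inner \<Rightarrow> real"
  assumes "(g has_derivative (\<lambda>h. u \<bullet> h)) (at p)" and "u \<bullet> w < 0"
  obtains d where "d > 0" "\<And>s. 0 < s \<Longrightarrow> s < d \<Longrightarrow> g (p + s *\<^sub>R w) < g p"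
proof -
  have "((\<lambda>s. g (p + s *\<^sub>R w)) has_real_derivative (u \<bullet> w)) (at 0)"
    using gradient_along_line[of g u p 0 w] assms(1) by simp
  from DERIV_neg_dec_right[OF this assms(2)] show ?thesis
    using that by auto
qed

definition nearest_in_sublevel :: "('a::real_normed_vector \<Rightarrow> real) \<Rightarrow> real \<Rightarrow> 'a \<Rightarrow> 'a \<Rightarrow> bool"
  where "nearest_in_sublevel g c x p \<longleftrightarrow>
           g p \<le> c \<and> (\<forall>y. g y \<le> c \<longrightarrow> norm (x - p) \<le> norm (x - y))"

lemma nearest_in_sublevel_exists:
  fixes g :: "'a::{real_normed_vector, heine_borel} \<Rightarrow> real"
  assumes "continuous_on UNIV g" and "g z \<le> c"
  obtains p where "nearest_in_sublevel g c x p"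
proof -
  have "closed {y. g y \<le> c}"
    using closed_Collect_le[OF assms(1) continuous_on_const] by simp
  moreover have "{y. g y \<le> c} \<noteq> {}" using assms(2) by auto
  ultimately obtain p where "p \<in> {y. g y \<le> c}" "\<And>y. y \<in> {y. g y \<le> c} \<Longrightarrow> dist x p \<le> dist x y"
    by (meson distance_attains_inf)
  then show ?thesis
    using that by (auto simp: nearest_in_sublevel_def dist_norm)
qed

text \<open>A nearest point different from x lies on the level set {g = c}: otherwise, by continuity,
  the segment from p towards x would stay in the sublevel set for a while.\<close>
lemma nearest_in_sublevel_on_level_set:
  fixes g :: "'a::real_normed_vector \<Rightarrow> real"
  assumes cont: "continuous_on UNIV g" and near: "nearest_in_sublevel g c x p" and "x \<noteq> p"
  shows "g p = c"
proof (rule ccontr)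
  assume "g p \<noteq> c"
  then have lt: "g p < c" using near by (simp add: nearest_in_sublevel_def)
  define v where "v = x - p"
  have "continuous_on UNIV (\<lambda>s. g (p + s *\<^sub>R v))"
    by (rule continuous_on_compose2[OF cont]) (auto intro!: continuous_intros)
  then have "continuous (at 0) (\<lambda>s. g (p + s *\<^sub>R v))"
    by (simp add: continuous_on_eq_continuous_at)
  then have "((\<lambda>s. g (p + s *\<^sub>R v)) \<longlongrightarrow> g p) (at 0)"
    by (simp add: isCont_def)
  then have "\<forall>\<^sub>F s in at 0. g (p + s *\<^sub>R v) < c"
    using lt by (rule order_tendstoD)
  then obtain d where d: "d > 0" "\<And>s. s \<noteq> 0 \<Longrightarrow> dist s 0 < d \<Longrightarrow> g (p + s *\<^sub>R v) < c"
    by (auto simp: eventually_at)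
  define s where "s = min (d/2) (1/2)"
  have s: "0 < s" "s < 1" "dist s 0 < d" using d s_def by auto
  have "norm v \<le> norm (x - (p + s *\<^sub>R v))"
    using near d(2)[of s] s by (auto simp: nearest_in_sublevel_def v_def)
  also have "x - (p + s *\<^sub>R v) = (1 - s) *\<^sub>R v" by (simp add: v_def algebra_simps)
  finally have "norm v \<le> (1 - s) * norm v" using s by simp
  moreover have "norm v > 0" using \<open>x \<noteq> p\<close> by (simp add: v_def)
  ultimately show False using s by (simp add: mult_le_cancel_right1)
qed

text \<open>First-order optimality of a nearest point: x - p points in the direction of the gradient
  u of g at p (equality case of Cauchy-Schwarz).  Otherwise the direction
  w = (x - p)/|x - p| - u/|u| is a descent direction for g that also decreases the distance to x.\<close>
lemma nearest_in_sublevel_gradient_aligned: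
  fixes g :: "'a::real_inner \<Rightarrow> real"
  assumes near: "nearest_in_sublevel g c x p"
    and diff: "(g has_derivative (\<lambda>h. u \<bullet> h)) (at p)"
  shows "norm u * norm (x - p) \<le> u \<bullet> (x - p)"
proof (cases "x = p \<or> u = 0")
  case False
  define v where "v = x - p"
  have nv: "norm v > 0" and nu: "norm u > 0" using False by (auto simp: v_def)
  show ?thesis
  proof (rule ccontr)
    assume A: "\<not> ?thesis"
    define w where "w = (1 / norm v) *\<^sub>R v - (1 / norm u) *\<^sub>R u"
    have A': "\<not> norm u * norm v \<le> u \<bullet> v" using A by (simp add: v_def)
    have "u \<bullet> w = u \<bullet> v / norm v - norm u"
      by (simp add: w_def inner_diff_right dot_square_norm power2_eq_square)
    moreover have "u \<bullet> v / norm v < norm u" using A' nv by (simp add: divide_less_eq mult.commute)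
    ultimately have uw: "u \<bullet> w < 0" by simp
    have "v \<bullet> w = norm v - u \<bullet> v / norm u"
      by (simp add: w_def inner_diff_right dot_square_norm power2_eq_square inner_commute)
    moreover have "u \<bullet> v / norm u < norm v" using A' nu by (simp add: divide_less_eq mult.commute)
    ultimately have vw: "v \<bullet> w > 0" by simp
    have w0: "w \<noteq> 0" using uw by auto
    obtain d where d: "d > 0" "\<And>s. 0 < s \<Longrightarrow> s < d \<Longrightarrow> g (p + s *\<^sub>R w) < g p"
      using descent_direction[OF diff uw] by blast
    define s where "s = min (d/2) ((v \<bullet> w) / (norm w)^2)"
    have s: "s > 0" "s < d" using d vw w0 by (auto simp: s_def)
    have s_small: "s * (norm w)^2 \<le> v \<bullet> w" using w0 by (simp add: s_def field_simps min_def)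
    have "g (p + s *\<^sub>R w) \<le> c" using d(2)[OF s] near by (simp add: nearest_in_sublevel_def)
    then have "norm v \<le> norm (v - s *\<^sub>R w)"
      using near by (auto simp: nearest_in_sublevel_def v_def algebra_simps)
    then have "(norm v)^2 \<le> (norm (v - s *\<^sub>R w))^2" by (simp add: power_mono)
    also have "\<dots> = (norm v)^2 - 2 * s * (v \<bullet> w) + s^2 * (norm w)^2"
      unfolding power2_norm_eq_inner
      by (simp add: inner_diff_left inner_diff_right inner_commute algebra_simps power2_eq_square)
    finally have "2 * s * (v \<bullet> w) \<le> s * (s * (norm w)^2)"
      by (simp add: power2_eq_square algebra_simps)
    also have "\<dots> \<le> s * (v \<bullet> w)" using s_small s by (simp add: mult_left_mono)
    finally show False using s vw by (simp add: mult_le_cancel_right1)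
  qed
qed auto

lemma distance_to_tightened_sublevel:
  fixes g :: "'a::real_inner \<Rightarrow> real"
  assumes conv: "convex_on UNIV g"
    and diff: "\<And>y. (g has_derivative (\<lambda>h. gradg y \<bullet> h)) (at y)"
    and sigma_pos: "\<sigma> > 0"
    and sigma_bound: "\<And>y. g y = c \<Longrightarrow> \<sigma> \<le> norm (gradg y)"
    and feas: "g x \<le> c0" and tighter: "c \<le> c0"
    and near: "nearest_in_sublevel g c x p"
  shows "norm (x - p) \<le> (c0 - c) / \<sigma>"
proof (cases "x = p")
  case False
  have cont: "continuous_on UNIV g"
    using diff by (meson has_derivative_continuous continuous_at_imp_continuous_on)
  have level: "g p = c"
    using nearest_in_sublevel_on_level_set[OF cont near False] .
  have "\<sigma> * norm (x - p) \<le> norm (gradg p) * norm (x - p)"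
    using sigma_bound[OF level] by (simp add: mult_right_mono)
  also have "\<dots> \<le> gradg p \<bullet> (x - p)"
    by (rule nearest_in_sublevel_gradient_aligned[OF near diff])
  also have "\<dots> \<le> g x - g p"
    using convex_gradient_inequality[OF conv diff, of p x] by simp
  also have "\<dots> \<le> c0 - c" using feas level by simp
  finally show ?thesis using sigma_pos by (simp add: field_simps mult.commute)
qed (use tighter sigma_pos in simp)

theorem mainTheorem10:
  fixes fs :: "nat \<Rightarrow> real ^ 'd \<Rightarrow> real"
    and gradf :: "nat \<Rightarrow> real ^ 'd \<Rightarrow> real ^ 'd"
    and g :: "real ^ 'd \<Rightarrow> real"
    and gradg :: "real ^ 'd \<Rightarrow> real ^ 'd"
    and T :: nat and G \<gamma> \<sigma> :: real
    and xstar xgam :: "real ^ 'd"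
  assumes conv_f: "\<And>t. t \<in> {1..T} \<Longrightarrow> convex_on UNIV (fs t)"
    and diff_f: "\<And>t x. t \<in> {1..T} \<Longrightarrow> (fs t has_derivative (\<lambda>h. gradf t x \<bullet> h)) (at x)"
    and grad_bound: "\<And>t x. t \<in> {1..T} \<Longrightarrow> norm (gradf t x) \<le> G"
    and conv_g: "convex_on UNIV g"
    and diff_g: "\<And>x. (g has_derivative (\<lambda>h. gradg x \<bullet> h)) (at x)"
    and gamma_nonneg: "\<gamma> \<ge> 0"
    and slater: "\<exists>x. g x < - \<gamma>"
    and sigma_pos: "\<sigma> > 0"
    and sigma_bound: "\<And>x. g x + \<gamma> = 0 \<Longrightarrow> norm (gradg x) \<ge> \<sigma>"
    and xstar_feas: "g xstar \<le> 0"
    and xstar_min: "\<And>y. g y \<le> 0 \<Longrightarrow> (\<Sum>t\<in>{1..T}. fs t xstar) \<le> (\<Sum>t\<in>{1..T}. fs t y)"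
    and xgam_feas: "g xgam \<le> - \<gamma>"
    and xgam_min: "\<And>y. g y \<le> - \<gamma> \<Longrightarrow> (\<Sum>t\<in>{1..T}. fs t xgam) \<le> (\<Sum>t\<in>{1..T}. fs t y)"
  shows "\<bar>(\<Sum>t\<in>{1..T}. fs t xstar) - (\<Sum>t\<in>{1..T}. fs t xgam)\<bar> \<le> G / \<sigma> * \<gamma> * real T"
proof -
  let ?F = "\<lambda>x. \<Sum>t\<in>{1..T}. fs t x"
  have cont_g: "continuous_on UNIV g"
    using diff_g by (meson has_derivative_continuous continuous_at_imp_continuous_on)
  obtain p where near: "nearest_in_sublevel g (- \<gamma>) xstar p"
    using nearest_in_sublevel_exists[OF cont_g xgam_feas] .
  have dist_p: "norm (xstar - p) \<le> \<gamma> / \<sigma>"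
    using distance_to_tightened_sublevel[OF conv_g diff_g sigma_pos _ xstar_feas _ near]
      sigma_bound gamma_nonneg by fastforce
  have "T \<noteq> 0 \<Longrightarrow> 0 \<le> G"
    using grad_bound[of 1 xstar] by (auto intro: order_trans[OF norm_ge_zero])
  then have TG: "real T * G \<ge> 0" by (cases "T = 0") auto
  have "?F xstar \<le> ?F xgam" using xstar_min xgam_feas gamma_nonneg by simp
  moreover have "?F xgam \<le> ?F p" using xgam_min near by (simp add: nearest_in_sublevel_def)
  moreover have "?F p - ?F xstar \<le> real T * G * norm (xstar - p)"
    using sum_lipschitz_from_gradient_bound[where I = "{1..T}" and f = fs and a = gradf,
        OF diff_f grad_bound, of p xstar]
    by (simp add: norm_minus_commute)
  moreover have "real T * G * norm (xstar - p) \<le> real T * G * (\<gamma> / \<sigma>)"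
    using dist_p TG by (rule mult_left_mono)
  moreover have "real T * G * (\<gamma> / \<sigma>) = G / \<sigma> * \<gamma> * real T" by simp
  ultimately show ?thesis by linarith
qed

end
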